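(* Let $(p,q,r)$ be a triple on the boundary of the local $L^2$-range, i.e. $2\le p,q\le\infty$, $\frac1p+\frac1q=\frac1r$, $\frac1p+\frac1q\ge\frac12$, and at least one of $p=2$, $q=2$, $r=2$ holds. Then the function $m(\xi,\eta)=e^{i\xi\cdot\eta}$ on $\mathbb{R}^n\times\mathbb{R}^n$ does not belong to $\mathcal M_{p,q,r}(\mathbb{R}^n)$.
   Context: Fourier transform: $\hat f(\xi)=\int_{\mathbb{R}^n} f(x)e^{-2\pi i x\cdot \xi}dx$. For bounded measurable $m$ on $\mathbb{R}^n\times\mathbb{R}^n$, $M_m(f,g)(x)=\int\int\hat f(\xi)\hat g(\eta)m(\xi,\eta)e^{2\pi i x\cdot(\xi+\eta)}d\xi d\eta$ for Schwartz $f,g$; $m\in\mathcal M_{p,q,r}(\mathbb{R}^n)$ means $M_m$ extends to a bounded bilinear operator $L^p(\mathbb{R}^n)\times L^q(\mathbb{R}^n)\to L^r(\mathbb{R}^n)$. The local $L^2$-range is the set of triples with $2\le p,q,r'\le\infty$ and $\frac1p+\frac1q=\frac1r$. *)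

theory Defs
  imports "HOL-Analysis.Analysis" "HOL-Probability.Essential_Supremum"
begin

fun deriv_seq :: "'a::euclidean_space list \<Rightarrow> ('a \<Rightarrow> complex) \<Rightarrow> ('a \<Rightarrow> complex)" where
  "deriv_seq [] f = f"
| "deriv_seq (v # vs) f = (\<lambda>x. frechet_derivative (deriv_seq vs f) (at x) v)"

definition schwartz :: "('a::euclidean_space \<Rightarrow> complex) \<Rightarrow> bool" where
  "schwartz f \<longleftrightarrow>
     (\<forall>vs. set vs \<subseteq> Basis \<longrightarrow>
        (\<forall>x. deriv_seq vs f differentiable (at x)) \<and>
        (\<forall>k::nat. bounded (range (\<lambda>x. norm x ^ k * norm (deriv_seq vs f x)))))"

definition fourier :: "('a::euclidean_space \<Rightarrow> complex) \<Rightarrow> 'a \<Rightarrow> complex" where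
  "fourier f \<xi> = (LINT x|lborel. f x * cis (- 2 * pi * (x \<bullet> \<xi>)))"

definition bilin_mult ::
  "('a::euclidean_space \<Rightarrow> 'a \<Rightarrow> complex) \<Rightarrow> ('a \<Rightarrow> complex) \<Rightarrow> ('a \<Rightarrow> complex) \<Rightarrow> 'a \<Rightarrow> complex" where
  "bilin_mult m f g x =
     (LINT \<xi>|lborel. LINT \<eta>|lborel.
        fourier f \<xi> * fourier g \<eta> * m \<xi> \<eta> * cis (2 * pi * (x \<bullet> (\<xi> + \<eta>))))"

definition Lp_norm :: "ereal \<Rightarrow> ('a::euclidean_space \<Rightarrow> complex) \<Rightarrow> ennreal" where
  "Lp_norm p h =
     (if p = \<infinity> then esssup lborel (\<lambda>x. ennreal (norm (h x)))
      else (let I = (\<integral>\<^sup>+ x. ennreal (norm (h x) powr real_of_ereal p) \<partial>lborel)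
            in if I = \<infinity> then \<infinity> else ennreal (enn2real I powr (1 / real_of_ereal p))))"

definition bilinear_multiplier_class :: "ereal \<Rightarrow> ereal \<Rightarrow> ereal \<Rightarrow> ('a::euclidean_space \<Rightarrow> 'a \<Rightarrow> complex) \<Rightarrow> bool" where
  "bilinear_multiplier_class p q r m \<longleftrightarrow>
     (\<exists>C::real. \<forall>f g. schwartz f \<longrightarrow> schwartz g \<longrightarrow>
        Lp_norm r (bilin_mult m f g) \<le> ennreal C * Lp_norm p f * Lp_norm q g)"

end

(* The counterexample is a family of Gaussian chirps f = exp (- z1 |x|^2), g = exp (- z2 |x|^2) with
   complex parameters depending on t > 0. Since Gaussian integrals with complex parameters can be
   evaluated in closed form (analytic continuation from real parameters), M_m(f,g) is again a
   Gaussian K exp (- W |x|^2), and f, g and M_m(f,g) all have widths of order t^(-1/2). The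
   parameters are tuned so that the quadratic phase created by e^(i xi.eta) cancels, which makes
   the amplitude K of order t^(-n/2). Hence ||M_m(f,g)||_r / (||f||_p ||g||_q) is at least of
   order t^(-n/2), unbounded as t tends to 0; the conditions p, q >= 2 and r <= 2 only enter
   through the constants. *)

theory Submission
  imports Defs "HOL-Probability.Probability" "HOL-Complex_Analysis.Complex_Analysis" "HOL-Real_Asymp.Real_Asymp"
begin

lemma has_bochner_integral_std_gauss_iexp:
  fixes v :: real
  shows "has_bochner_integral lborel (\<lambda>x. complex_of_real (exp (- x\<^sup>2 / 2)) * exp (\<i> * complex_of_real (v * x)))
           (complex_of_real (sqrt (2*pi) * exp (- v\<^sup>2 / 2)))"
proof -
  interpret real_distribution std_normal_distribution by (rule real_dist_normal_dist)
  have int1: "integrable std_normal_distribution (\<lambda>x. iexp (v * x))"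
    by (rule integrable_const_bound[where B=1]) (auto simp: norm_exp_i_times)
  have hb: "has_bochner_integral std_normal_distribution (\<lambda>x. iexp (v * x)) (complex_of_real (exp (- v\<^sup>2 / 2)))"
    using int1 char_std_normal_distribution unfolding char_def
    by (metis has_bochner_integral_integrable) 
  have "has_bochner_integral lborel (\<lambda>x. std_normal_density x *\<^sub>R iexp (v * x)) (complex_of_real (exp (- v\<^sup>2 / 2)))"
    using hb by (simp add: has_bochner_integral_iff integrable_density integral_density)
  then have "has_bochner_integral lborel (\<lambda>x. complex_of_real (sqrt (2*pi)) * (std_normal_density x *\<^sub>R iexp (v * x)))
      (complex_of_real (sqrt (2*pi)) * complex_of_real (exp (- v\<^sup>2 / 2)))"
    by (rule has_bochner_integral_mult_right)
  then show ?thesis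
    by (simp add: std_normal_density_def scaleR_conv_of_real)
qed

definition gauss_lin :: "complex \<Rightarrow> complex \<Rightarrow> real \<Rightarrow> complex" where
  "gauss_lin z w t = exp (- (z * complex_of_real t ^ 2) + w * complex_of_real t)"

lemma gauss_lin_measurable[measurable]: "gauss_lin z w \<in> borel_measurable borel"
  unfolding gauss_lin_def by measurable

lemma continuous_on_gauss_lin: "continuous_on S (gauss_lin z w)"
  unfolding gauss_lin_def by (intro continuous_intros)

lemma norm_gauss_lin: "norm (gauss_lin z w t) = exp (- Re z * t\<^sup>2 + Re w * t)"
  unfolding gauss_lin_def norm_exp_eq_Re by (simp add: power2_eq_square)

lemma gauss_lin_affine_substitution:
  fixes a :: real and w :: complex
  assumes a: "a > 0"
  defines "s \<equiv> 1 / sqrt (2 * a)" and "m \<equiv> Re w / (2 * a)"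
  shows "gauss_lin (complex_of_real a) w (m + s * x) = complex_of_real (exp ((Re w)^2 / (4*a))) * exp (\<i> * complex_of_real (Im w * m)) *
           (complex_of_real (exp (- x\<^sup>2 / 2)) * exp (\<i> * complex_of_real ((Im w * s) * x)))"
proof -
  define u where "u = Re w"
  define v where "v = Im w"
  have w: "w = complex_of_real u + \<i> * complex_of_real v" by (simp add: u_def v_def complex_eq)
  have ss: "s^2 = 1 / (2*a)" using a by (simp add: s_def power_divide)
  have r: "- (a * (m + s*x)^2) + u * (m + s*x) = u^2/(4*a) + (- x\<^sup>2 / 2)"
    using a ss unfolding m_def u_def by (simp add: field_simps power2_eq_square)
  have r2: "Re (complex_of_real a * complex_of_real (m + s*x) ^ 2) = a * (m + s*x)^2"
    "Im (complex_of_real a * complex_of_real (m + s*x) ^ 2) = 0"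
    by (simp_all add: power2_eq_square)
  have "- (complex_of_real a * complex_of_real (m + s*x) ^ 2) + w * complex_of_real (m + s*x)
      = complex_of_real (u^2 / (4*a)) + \<i> * complex_of_real (v * m) + (complex_of_real (- x\<^sup>2 / 2) + \<i> * complex_of_real ((v * s) * x))"
    unfolding complex_eq_iff using r r2 by (simp add: w algebra_simps)
  then show ?thesis unfolding gauss_lin_def u_def v_def by (simp only: exp_add exp_of_real)
qed

lemma has_bochner_integral_gauss_lin_of_real:
  fixes a :: real
  assumes a: "a > 0"
  shows "has_bochner_integral lborel (gauss_lin (complex_of_real a) w)
           (complex_of_real (sqrt (pi / a)) * exp (w ^ 2 / (4 * complex_of_real a)))"
proof -
  define u where "u = Re w"
  define v where "v = Im w"
  have w: "w = complex_of_real u + \<i> * complex_of_real v" by (simp add: u_def v_def complex_eq)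
  define s where "s = 1 / sqrt (2 * a)"
  define m where "m = u / (2 * a)"
  have s0: "s > 0" using a by (simp add: s_def)
  have ss: "s^2 = 1 / (2*a)" using a by (simp add: s_def power_divide)
  let ?f = "gauss_lin (complex_of_real a) w"
  have key: "?f (m + s * x) = complex_of_real (exp (u^2 / (4*a))) * exp (\<i> * complex_of_real (v * m)) *
               (complex_of_real (exp (- x\<^sup>2 / 2)) * exp (\<i> * complex_of_real ((v * s) * x)))" for x
    using gauss_lin_affine_substitution[OF a, of w x] by (simp only: s_def m_def u_def v_def)
  have h1: "has_bochner_integral lborel (\<lambda>x. ?f (m + s * x))
     (complex_of_real (exp (u^2 / (4*a))) * exp (\<i> * complex_of_real (v * m)) *
      complex_of_real (sqrt (2*pi) * exp (- (v * s)\<^sup>2 / 2)))"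
    unfolding key
    by (rule has_bochner_integral_mult_right) (rule has_bochner_integral_std_gauss_iexp)
  define X where "X = s *\<^sub>R (complex_of_real (exp (u^2 / (4*a))) * exp (\<i> * complex_of_real (v * m)) *
      complex_of_real (sqrt (2*pi) * exp (- (v * s)\<^sup>2 / 2)))"
  have "has_bochner_integral lborel ?f X"
    using lborel_has_bochner_integral_real_affine_iff[of s ?f X m] s0 h1 by (simp add: X_def)
  moreover have "X = complex_of_real (sqrt (pi / a)) * exp (w ^ 2 / (4 * complex_of_real a))"
  proof -
    have e1: "s * sqrt (2*pi) = sqrt (pi / a)"
      using a by (simp add: s_def real_sqrt_divide real_sqrt_mult field_simps)
    have e2: "w ^ 2 / (4 * complex_of_real a) = complex_of_real (u^2 / (4*a)) + \<i> * complex_of_real (v * m)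
               + complex_of_real (- (v * s)\<^sup>2 / 2)"
      using a ss unfolding complex_eq_iff w m_def
      by (simp add: power2_eq_square field_simps Re_divide Im_divide)
    show ?thesis unfolding X_def e2 exp_add exp_of_real
      by (simp add: scaleR_conv_of_real e1[symmetric] mult_ac)
  qed
  ultimately show ?thesis by simp
qed

lemma integrable_gauss_lin:
  assumes "Re z > 0"
  shows "integrable lborel (gauss_lin z w)"
proof -
  have "integrable lborel (gauss_lin (complex_of_real (Re z)) (complex_of_real (Re w)))"
    using has_bochner_integral_gauss_lin_of_real[OF assms] by (auto simp: has_bochner_integral_iff)
  then show ?thesis
    by (rule Bochner_Integration.integrable_bound) (auto simp: norm_gauss_lin)
qed

lemma integrable_exp_quadratic_abs:
  fixes d b :: real
  assumes "d > 0"
  shows "integrable lborel (\<lambda>t. exp (- d * t\<^sup>2 + b * \<bar>t\<bar>))"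
proof -
  have i1: "integrable lborel (\<lambda>t. norm (gauss_lin (complex_of_real d) (complex_of_real b) t) + norm (gauss_lin (complex_of_real d) (complex_of_real (-b)) t))"
    using integrable_gauss_lin[of "complex_of_real d"] assms by (intro Bochner_Integration.integrable_add integrable_norm) auto
  show ?thesis
  proof (rule Bochner_Integration.integrable_bound[OF i1])
    show "AE x in lborel. norm (exp (- d * x\<^sup>2 + b * \<bar>x\<bar>)) \<le> norm (norm (gauss_lin (complex_of_real d) (complex_of_real b) x) + norm (gauss_lin (complex_of_real d) (complex_of_real (-b)) x))"
    proof (intro AE_I2)
      fix x :: real
      have p: "exp (- d * x\<^sup>2 + b * \<bar>x\<bar>) \<le> exp (- d * x\<^sup>2 + b * x) + exp (- d * x\<^sup>2 + (- b) * x)"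
      proof (cases "x \<ge> 0")
        case True then show ?thesis by (simp add: add_increasing2)
      next
        case False then show ?thesis by (simp add: add_increasing)
      qed
      then show "norm (exp (- d * x\<^sup>2 + b * \<bar>x\<bar>)) \<le> norm (norm (gauss_lin (complex_of_real d) (complex_of_real b) x) + norm (gauss_lin (complex_of_real d) (complex_of_real (-b)) x))"
        by (simp add: norm_gauss_lin)
    qed
  qed measurable
qed

lemma integral_interval_gauss_lin_holomorphic: "(\<lambda>z. integral {-c..c} (gauss_lin z w)) holomorphic_on {z. 0 < Re z}"
  unfolding holomorphic_on_def
proof
  fix z0 :: complex assume z0: "z0 \<in> {z. 0 < Re z}"
  have "(\<lambda>z. integral (cbox (-c) c) (gauss_lin z w)) field_differentiable at z0 within {z. 0 < Re z}"
  proof (rule leibniz_rule_field_differentiable[where fx="\<lambda>z t. - (complex_of_real t ^ 2) * gauss_lin z w t"])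
    show "((\<lambda>z. gauss_lin z w t) has_field_derivative - (complex_of_real t ^ 2) * gauss_lin x w t) (at x within {z. 0 < Re z})" for x t
      unfolding gauss_lin_def by (auto intro!: derivative_eq_intros)
    show "gauss_lin x w integrable_on cbox (- c) c" for x
      by (rule integrable_continuous) (rule continuous_on_gauss_lin)
    show "continuous_on ({z. 0 < Re z} \<times> cbox (- c) c) (\<lambda>(x, t). - (complex_of_real t ^ 2) * gauss_lin x w t)"
      unfolding gauss_lin_def case_prod_unfold by (intro continuous_intros)
    show "convex {z. 0 < Re z}" by (rule convex_halfspace_Re_gt)
  qed (use z0 in auto)
  then show "(\<lambda>z. integral {-c..c} (gauss_lin z w)) field_differentiable at z0 within {z. 0 < Re z}"
    by simp
qed

lemma gauss_lin_integral_tail: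
  assumes "Re z > 0"
  shows "(LINT t|lborel. gauss_lin z w t) - integral {-c..c} (gauss_lin z w) = (LINT t|lborel. indicator (- {-c..c}) t *\<^sub>R gauss_lin z w t)"
proof -
  have si: "set_integrable lborel {-c..c} (gauss_lin z w)"
    by (rule borel_integrable_atLeastAtMost') (rule continuous_on_gauss_lin)
  have e1: "integral {-c..c} (gauss_lin z w) = (LINT t|lborel. indicator {-c..c} t *\<^sub>R gauss_lin z w t)"
    using set_borel_integral_eq_integral(2)[OF si] by (simp add: set_lebesgue_integral_def)
  have i2: "integrable lborel (\<lambda>t. indicator {-c..c} t *\<^sub>R gauss_lin z w t)"
    using si by (simp add: set_integrable_def)
  have "(LINT t|lborel. gauss_lin z w t) - (LINT t|lborel. indicator {-c..c} t *\<^sub>R gauss_lin z w t)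
      = (LINT t|lborel. gauss_lin z w t - indicator {-c..c} t *\<^sub>R gauss_lin z w t)"
    using integrable_gauss_lin[OF assms] i2 by (simp add: Bochner_Integration.integral_diff)
  also have "\<dots> = (LINT t|lborel. indicator (- {-c..c}) t *\<^sub>R gauss_lin z w t)"
    by (intro Bochner_Integration.integral_cong) (auto split: split_indicator)
  finally show ?thesis using e1 by simp
qed

lemma tail_integral_exp_quadratic_abs_tendsto_0:
  fixes d b :: real
  assumes "d > 0"
  shows "(\<lambda>n::nat. LINT t|lborel. indicator (- {- real n..real n}) t * exp (- d * t\<^sup>2 + b * \<bar>t\<bar>)) \<longlonglongrightarrow> 0"
proof -
  have i: "integrable lborel (\<lambda>t. exp (- d * t\<^sup>2 + b * \<bar>t\<bar>))" by (rule integrable_exp_quadratic_abs[OF assms])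
  have l: "AE x in lborel. (\<lambda>n::nat. indicator (- {- real n..real n}) x * exp (- d * x\<^sup>2 + b * \<bar>x\<bar>)) \<longlonglongrightarrow> 0"
  proof (intro AE_I2 tendsto_eventually)
    fix x :: real
    obtain N :: nat where N: "\<bar>x\<bar> \<le> real N" using real_arch_simple by blast
    show "\<forall>\<^sub>F n in sequentially. indicator (- {- real n..real n}) x * exp (- d * x\<^sup>2 + b * \<bar>x\<bar>) = 0"
      using eventually_ge_at_top[of N]
      by eventually_elim (use N in \<open>auto simp: indicator_def abs_le_iff\<close>)
  qed
  have bd: "AE x in lborel. norm (indicator (- {- real n..real n}) x * exp (- d * x\<^sup>2 + b * \<bar>x\<bar>)) \<le> exp (- d * x\<^sup>2 + b * \<bar>x\<bar>)" for n :: nat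
    by (intro AE_I2) (auto simp: indicator_def)
  have "(\<lambda>n::nat. LINT t|lborel. indicator (- {- real n..real n}) t * exp (- d * t\<^sup>2 + b * \<bar>t\<bar>)) \<longlonglongrightarrow> (LINT t|lborel. (0::real))"
    using Bochner_Integration.integral_dominated_convergence[of "\<lambda>t. 0" lborel "\<lambda>n t. indicator (- {- real n..real n}) t * exp (- d * t\<^sup>2 + b * \<bar>t\<bar>)",
       OF _ _ i l bd] by simp
  then show ?thesis by simp
qed

lemma gauss_lin_truncation_error:
  assumes r: "0 < r" "r \<le> Re z"
  shows "norm ((LINT t|lborel. gauss_lin z w t) - integral {-c..c} (gauss_lin z w))
    \<le> (LINT t|lborel. indicator (- {-c..c}) t * exp (- r * t\<^sup>2 + \<bar>Re w\<bar> * \<bar>t\<bar>))"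
proof -
  have rz: "Re z > 0" using r by simp
  have "norm ((LINT t|lborel. gauss_lin z w t) - integral {-c..c} (gauss_lin z w))
      = norm (LINT t|lborel. indicator (- {-c..c}) t *\<^sub>R gauss_lin z w t)"
    by (simp add: gauss_lin_integral_tail[OF rz])
  also have "\<dots> \<le> (LINT t|lborel. indicator (- {-c..c}) t * exp (- r * t\<^sup>2 + \<bar>Re w\<bar> * \<bar>t\<bar>))"
  proof (rule Bochner_Integration.integral_norm_bound_integral)
    show "integrable lborel (\<lambda>t. indicator (- {-c..c}) t *\<^sub>R gauss_lin z w t)"
      by (rule integrable_mult_indicator) (auto intro: integrable_gauss_lin[OF rz])
    show "integrable lborel (\<lambda>t. indicator (- {-c..c}) t * exp (- r * t\<^sup>2 + \<bar>Re w\<bar> * \<bar>t\<bar>))"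
      using integrable_mult_indicator[OF _ integrable_exp_quadratic_abs[OF r(1), of "\<bar>Re w\<bar>"], of "- {-c..c}"] by simp
    fix t :: real
    have "Re z * t\<^sup>2 \<ge> r * t\<^sup>2" using r by (simp add: mult_right_mono)
    moreover have "Re w * t \<le> \<bar>Re w\<bar> * \<bar>t\<bar>" by (metis abs_ge_self abs_mult)
    ultimately have "exp (- Re z * t\<^sup>2 + Re w * t) \<le> exp (- r * t\<^sup>2 + \<bar>Re w\<bar> * \<bar>t\<bar>)" by simp
    then show "norm (indicator (- {-c..c}) t *\<^sub>R gauss_lin z w t) \<le> indicator (- {-c..c}) t * exp (- r * t\<^sup>2 + \<bar>Re w\<bar> * \<bar>t\<bar>)"
      by (auto simp: norm_gauss_lin indicator_def)
  qed
  finally show ?thesis .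
qed

lemma integral_gauss_lin_holomorphic: "(\<lambda>z. LINT t|lborel. gauss_lin z w t) holomorphic_on {z. 0 < Re z}"
proof -
  let ?H = "{z::complex. 0 < Re z}"
  let ?G = "\<lambda>z. LINT t|lborel. gauss_lin z w t"
  have loc: "?G holomorphic_on ball z0 (Re z0 / 2)" if z0: "z0 \<in> ?H" for z0
  proof -
    define r where "r = Re z0 / 2"
    have r0: "r > 0" using z0 by (simp add: r_def)
    have sub: "Re z \<ge> r" if "z \<in> cball z0 r" for z
    proof -
      have "\<bar>Re (z0 - z)\<bar> \<le> norm (z0 - z)" by (rule abs_Re_le_cmod)
      also have "\<dots> \<le> r" using that by (simp add: dist_norm)
      finally have "\<bar>Re z0 - Re z\<bar> \<le> Re z0 / 2" by (simp add: r_def)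
      then show ?thesis unfolding r_def abs_le_iff by linarith
    qed
    have cb: "cball z0 r \<subseteq> ?H" using sub r0 by fastforce
    define T where "T = (\<lambda>n::nat. LINT t|lborel. indicator (- {- real n..real n}) t * exp (- r * t\<^sup>2 + \<bar>Re w\<bar> * \<bar>t\<bar>))"
    have T: "T \<longlonglongrightarrow> 0" unfolding T_def by (rule tail_integral_exp_quadratic_abs_tendsto_0[OF r0])
    have ul: "uniform_limit (cball z0 r) (\<lambda>n z. integral {- real n..real n} (gauss_lin z w)) ?G sequentially"
      unfolding uniform_limit_iff
    proof (intro allI impI)
      fix e :: real assume e: "e > 0"
      have bound: "dist (integral {- real n..real n} (gauss_lin z w)) (?G z) \<le> T n" if "z \<in> cball z0 r" for z n
        using gauss_lin_truncation_error[OF r0 sub[OF that]] unfolding T_def by (simp add: dist_norm norm_minus_commute)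
      have "\<forall>\<^sub>F n in sequentially. T n < e"
        using T e by (auto simp: tendsto_iff dist_norm dest!: spec[of _ e] elim: eventually_mono)
      then show "\<forall>\<^sub>F n in sequentially. \<forall>x\<in>cball z0 r. dist (integral {- real n..real n} (gauss_lin x w)) (?G x) < e"
        by eventually_elim (blast intro: le_less_trans bound)
    qed
    have ev: "\<forall>\<^sub>F n in sequentially. continuous_on (cball z0 r) (\<lambda>z. integral {- real n..real n} (gauss_lin z w)) \<and>
                 (\<lambda>z. integral {- real n..real n} (gauss_lin z w)) holomorphic_on ball z0 r"
    proof (intro always_eventually allI conjI)
      fix n :: nat
      show "continuous_on (cball z0 r) (\<lambda>z. integral {- real n..real n} (gauss_lin z w))"
        by (rule holomorphic_on_imp_continuous_on, rule holomorphic_on_subset[OF integral_interval_gauss_lin_holomorphic cb])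
      show "(\<lambda>z. integral {- real n..real n} (gauss_lin z w)) holomorphic_on ball z0 r"
        by (rule holomorphic_on_subset[OF integral_interval_gauss_lin_holomorphic]) (use cb ball_subset_cball in blast)
    qed
    obtain "?G holomorphic_on ball z0 r"
      by (rule holomorphic_uniform_limit[OF ev ul]) simp
    then show ?thesis unfolding r_def .
  qed
  show ?thesis
    unfolding holomorphic_on_def
  proof
    fix z0 assume z0: "z0 \<in> ?H"
    then have "?G field_differentiable at z0"
      using holomorphic_on_imp_differentiable_at[OF loc[OF z0]] by simp
    then show "?G field_differentiable at z0 within ?H" by (rule field_differentiable_at_within)
  qed
qed

lemma pi_div_not_nonpos: "Re z > 0 \<Longrightarrow> complex_of_real pi / z \<notin> \<real>\<^sub>\<le>\<^sub>0"
proof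
  assume z: "Re z > 0" and "complex_of_real pi / z \<in> \<real>\<^sub>\<le>\<^sub>0"
  then obtain c where c: "c \<le> 0" "complex_of_real pi / z = complex_of_real c"
    by (auto elim!: nonpos_Reals_cases)
  have z0: "z \<noteq> 0" using z by auto
  have "complex_of_real pi = complex_of_real c * z" using c(2) z0 by (simp add: field_simps)
  then have "Re (complex_of_real pi) = Re (complex_of_real c * z)" by simp
  then have "pi = c * Re z" by simp
  moreover have "c * Re z \<le> 0" using c(1) z by (simp add: mult_nonpos_nonneg)
  ultimately show False using pi_gt_zero by linarith
qed

lemma has_bochner_integral_gauss_lin:
  assumes z: "Re z > 0"
  shows "has_bochner_integral lborel (gauss_lin z w) (csqrt (complex_of_real pi / z) * exp (w ^ 2 / (4 * z)))"
proof -
  let ?H = "{z::complex. 0 < Re z}"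
  let ?G = "\<lambda>z. LINT t|lborel. gauss_lin z w t"
  let ?R = "\<lambda>z. csqrt (complex_of_real pi / z) * exp (w ^ 2 / (4 * z))"
  have "(\<lambda>z. ?G z - ?R z) z = 0"
  proof (rule analytic_continuation[where f="\<lambda>z. ?G z - ?R z" and S="?H" and U="complex_of_real ` {0<..}" and \<xi>=1])
    show "(\<lambda>z. ?G z - ?R z) holomorphic_on ?H"
      by (intro holomorphic_intros integral_gauss_lin_holomorphic) (auto simp: pi_div_not_nonpos)
    show "open ?H" by (rule open_halfspace_Re_gt)
    show "connected ?H" by (rule convex_connected[OF convex_halfspace_Re_gt])
    show "complex_of_real ` {0<..} \<subseteq> ?H" by auto
    show "1 \<in> ?H" by simp
    show "z \<in> ?H" using z by simp
    show "1 islimpt complex_of_real ` {0<..}"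
      unfolding islimpt_approachable
    proof (intro allI impI)
      fix e :: real assume e: "e > 0"
      let ?x = "complex_of_real (1 + min e 1 / 2)"
      have "?x \<in> complex_of_real ` {0<..}" using e by (intro imageI) (auto simp: min_def)
      moreover have "?x \<noteq> 1" using e by (auto simp: min_def)
      moreover have "dist ?x 1 < e" using e by (auto simp: dist_norm min_def)
      ultimately show "\<exists>x'\<in>complex_of_real ` {0<..}. x' \<noteq> 1 \<and> dist x' 1 < e" by blast
    qed
    fix u assume "u \<in> complex_of_real ` {0<..}"
    then obtain a where a: "a > 0" "u = complex_of_real a" by auto
    have "?G u = complex_of_real (sqrt (pi / a)) * exp (w ^ 2 / (4 * complex_of_real a))"
      using has_bochner_integral_gauss_lin_of_real[OF a(1), of w] a(2) by (simp add: has_bochner_integral_iff)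
    moreover have "csqrt (complex_of_real pi / u) = complex_of_real (sqrt (pi / a))"
    proof -
      have "complex_of_real pi / u = complex_of_real (pi / a)" using a(2) by simp
      moreover have "csqrt (complex_of_real (pi / a)) = complex_of_real (sqrt (pi / a))"
        by (rule csqrt_of_real) (use a in simp)
      ultimately show ?thesis by simp
    qed
    ultimately show "?G u - ?R u = 0" using a by simp
  qed
  then show ?thesis using integrable_gauss_lin[OF z, of w] by (simp add: has_bochner_integral_iff)
qed

lemma has_bochner_integral_lborel_prod:
  fixes f :: "'a::euclidean_space \<Rightarrow> real \<Rightarrow> complex"
  assumes f: "\<And>b. b \<in> Basis \<Longrightarrow> has_bochner_integral lborel (f b) (I b)"
  shows "has_bochner_integral lborel (\<lambda>x::'a. \<Prod>b\<in>Basis. f b (x \<bullet> b)) (\<Prod>b\<in>Basis. I b)"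
proof -
  interpret product_sigma_finite "\<lambda>_::'a. lborel :: real measure"
    by standard
  have int: "\<And>b. b \<in> Basis \<Longrightarrow> integrable lborel (f b)" and val: "\<And>b. b \<in> Basis \<Longrightarrow> integral\<^sup>L lborel (f b) = I b"
    using f by (auto simp: has_bochner_integral_iff)
  have meas[measurable]: "\<And>b. b \<in> Basis \<Longrightarrow> f b \<in> borel_measurable borel"
    using int by (auto dest: borel_measurable_integrable)
  have e: "(\<Sum>c\<in>Basis. g c *\<^sub>R c) \<bullet> b = g b" if "b \<in> Basis" for g :: "'a \<Rightarrow> real" and b
    using that by (simp add: inner_sum_left inner_Basis if_distrib sum.delta cong: if_cong)
  have "has_bochner_integral (\<Pi>\<^sub>M b\<in>Basis. lborel) (\<lambda>g. \<Prod>b\<in>Basis. f b (g b)) (\<Prod>b\<in>Basis. I b)"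
    using product_integrable_prod[of Basis f] product_integral_prod[of Basis f] int val
    by (simp add: has_bochner_integral_iff)
  then have "has_bochner_integral (\<Pi>\<^sub>M b\<in>Basis. lborel) (\<lambda>g. \<Prod>b\<in>Basis. f b ((\<Sum>c\<in>Basis. g c *\<^sub>R c) \<bullet> b)) (\<Prod>b\<in>Basis. I b)"
    by (simp add: e cong: prod.cong)
  then have "has_bochner_integral (distr (\<Pi>\<^sub>M b\<in>Basis. lborel) borel (\<lambda>g. \<Sum>c\<in>Basis. g c *\<^sub>R c)) (\<lambda>x::'a. \<Prod>b\<in>Basis. f b (x \<bullet> b)) (\<Prod>b\<in>Basis. I b)"
    by (intro has_bochner_integral_distr) measurable
  then show ?thesis by (simp add: lborel_eq[symmetric])
qed

lemma has_bochner_integral_exp_quadratic_linear: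
  fixes u :: "'a::euclidean_space"
  assumes z: "Re z > 0"
  shows "has_bochner_integral lborel (\<lambda>x::'a. exp (- (z * complex_of_real (x \<bullet> x)) + c * complex_of_real (x \<bullet> u)))
           (csqrt (complex_of_real pi / z) ^ DIM('a) * exp (c ^ 2 * complex_of_real (u \<bullet> u) / (4 * z)))"
proof -
  have h: "has_bochner_integral lborel (\<lambda>x::'a. \<Prod>b\<in>Basis. gauss_lin z (c * complex_of_real (u \<bullet> b)) (x \<bullet> b))
      (\<Prod>b\<in>Basis. csqrt (complex_of_real pi / z) * exp ((c * complex_of_real (u \<bullet> b)) ^ 2 / (4 * z)))"
    by (rule has_bochner_integral_lborel_prod) (rule has_bochner_integral_gauss_lin[OF z])
  have e1: "(\<Prod>b\<in>Basis. gauss_lin z (c * complex_of_real (u \<bullet> b)) (x \<bullet> b)) = exp (- (z * complex_of_real (x \<bullet> x)) + c * complex_of_real (x \<bullet> u))" for x :: 'a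
  proof -
    have "(\<Prod>b\<in>Basis. gauss_lin z (c * complex_of_real (u \<bullet> b)) (x \<bullet> b))
        = exp (\<Sum>b\<in>Basis. - (z * complex_of_real (x \<bullet> b) ^ 2) + c * complex_of_real (u \<bullet> b) * complex_of_real (x \<bullet> b))"
      by (simp add: gauss_lin_def exp_sum)
    also have "(\<Sum>b\<in>Basis. - (z * complex_of_real (x \<bullet> b) ^ 2) + c * complex_of_real (u \<bullet> b) * complex_of_real (x \<bullet> b))
        = - (z * complex_of_real (x \<bullet> x)) + c * complex_of_real (x \<bullet> u)"
      by (simp add: sum.distrib sum_negf sum_distrib_left[symmetric] euclidean_inner[of x x] euclidean_inner[of x u]
          power2_eq_square mult_ac)
        (simp add: sum_subtractf sum_distrib_left)
    finally show ?thesis .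
  qed
  have e2: "(\<Prod>b\<in>Basis. csqrt (complex_of_real pi / z) * exp ((c * complex_of_real (u \<bullet> b)) ^ 2 / (4 * z)))
      = csqrt (complex_of_real pi / z) ^ DIM('a) * exp (c ^ 2 * complex_of_real (u \<bullet> u) / (4 * z))"
  proof -
    have "(\<Prod>b\<in>Basis. csqrt (complex_of_real pi / z) * exp ((c * complex_of_real (u \<bullet> b)) ^ 2 / (4 * z)))
       = csqrt (complex_of_real pi / z) ^ DIM('a) * exp (\<Sum>b\<in>Basis. (c * complex_of_real (u \<bullet> b)) ^ 2 / (4 * z))"
      by (simp add: prod.distrib exp_sum)
    also have "(\<Sum>b\<in>Basis. (c * complex_of_real (u \<bullet> b)) ^ 2 / (4 * z)) = c ^ 2 * complex_of_real (u \<bullet> u) / (4 * z)"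
      by (simp add: sum_divide_distrib[symmetric] sum_distrib_left[symmetric] euclidean_inner[of u u] power_mult_distrib power2_eq_square)
        (simp add: sum_distrib_left mult_ac)
    finally show ?thesis .
  qed
  show ?thesis using h unfolding e1 e2 .
qed

definition gauss :: "complex \<Rightarrow> 'a::euclidean_space \<Rightarrow> complex" where
  "gauss z x = exp (- (z * complex_of_real (x \<bullet> x)))"

definition gauss_const :: "complex \<Rightarrow> complex" where
  "gauss_const w = csqrt (complex_of_real pi / w)"

lemma norm_gauss: "norm (gauss z x) = exp (- Re z * (x \<bullet> x))"
  unfolding gauss_def by (simp add: norm_exp_eq_Re)

lemma norm_gauss_const: "w \<noteq> 0 \<Longrightarrow> norm (gauss_const w) = sqrt (pi / norm w)"
  unfolding gauss_const_def by (simp add: norm_divide)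

lemma has_bochner_integral_gauss_real:
  fixes a :: real
  assumes a: "a > 0"
  shows "has_bochner_integral lborel (\<lambda>x::'a::euclidean_space. exp (- a * (x \<bullet> x))) (sqrt (pi / a) ^ DIM('a))"
proof -
  have h: "has_bochner_integral lborel (\<lambda>x::'a. exp (- (complex_of_real a * complex_of_real (x \<bullet> x)) + 0 * complex_of_real (x \<bullet> 0)))
           (csqrt (complex_of_real pi / complex_of_real a) ^ DIM('a) * exp (0 ^ 2 * complex_of_real ((0::'a) \<bullet> 0) / (4 * complex_of_real a)))"
    by (rule has_bochner_integral_exp_quadratic_linear[where z="complex_of_real a" and c=0 and u="0::'a"]) (use a in simp)
  have e1: "exp (- (complex_of_real a * complex_of_real (x \<bullet> x)) + 0 * complex_of_real (x \<bullet> 0)) = complex_of_real (exp (- a * (x \<bullet> x)))" for x :: 'a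
    by (simp add: exp_of_real[symmetric])
  have e2: "csqrt (complex_of_real pi / complex_of_real a) = complex_of_real (sqrt (pi / a))"
  proof -
    have "complex_of_real pi / complex_of_real a = complex_of_real (pi / a)" by simp
    moreover have "csqrt (complex_of_real (pi / a)) = complex_of_real (sqrt (pi / a))"
      by (rule csqrt_of_real) (use a in simp)
    ultimately show ?thesis by simp
  qed
  have "has_bochner_integral lborel (\<lambda>x::'a. complex_of_real (exp (- a * (x \<bullet> x)))) (complex_of_real (sqrt (pi / a) ^ DIM('a)))"
    using h unfolding e1 e2 by simp
  then show ?thesis
    by (simp add: has_bochner_integral_iff complex_of_real_integrable_eq of_real_power[symmetric] del: of_real_power)
qed

lemma Lp_norm_eq_gaussian_modulus:
  fixes h :: "'a::euclidean_space \<Rightarrow> complex"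
  assumes hn: "\<And>x. norm (h x) = A * exp (- a * (x \<bullet> x))" and A: "A \<ge> 0" and a: "a > 0" and p: "p > 0"
  shows "Lp_norm (ereal p) h = ennreal (A * (pi / (p * a)) powr (DIM('a) / (2 * p)))"
proof -
  define S where "S = sqrt (pi / (p * a))"
  have pa: "p * a > 0" using a p by simp
  have pw: "norm (h x) powr p = A powr p * exp (- (p * a) * (x \<bullet> x))" for x
    by (simp add: hn powr_mult exp_powr_real mult_ac)
  have hb: "has_bochner_integral lborel (\<lambda>x::'a. A powr p * exp (- (p * a) * (x \<bullet> x))) (A powr p * S ^ DIM('a))"
    unfolding S_def by (rule has_bochner_integral_mult_right) (rule has_bochner_integral_gauss_real[OF pa])
  have I: "(\<integral>\<^sup>+ x. ennreal (norm (h x) powr p) \<partial>lborel) = ennreal (A powr p * S ^ DIM('a))"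
    unfolding pw using hb
    by (subst nn_integral_eq_integral) (auto simp: has_bochner_integral_iff)
  have S0: "S \<ge> 0" unfolding S_def using pa by simp
  have v: "(A powr p * S ^ DIM('a)) powr (1 / p) = A * (pi / (p * a)) powr (DIM('a) / (2 * p))"
  proof -
    have "S ^ DIM('a) = (pi / (p * a)) powr (DIM('a) / 2)"
    proof -
      have "S = (pi / (p * a)) powr (1/2)" unfolding S_def using pa by (simp add: powr_half_sqrt)
      then have "S ^ DIM('a) = ((pi / (p * a)) powr (1/2)) powr (real DIM('a))"
        using S0 by (simp add: powr_realpow')
      then show ?thesis by (simp add: powr_powr)
    qed
    then have "(A powr p * S ^ DIM('a)) powr (1 / p) = (A powr p) powr (1/p) * ((pi / (p * a)) powr (DIM('a) / 2)) powr (1/p)"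
      by (simp add: powr_mult)
    also have "\<dots> = A * (pi / (p * a)) powr (DIM('a) / (2 * p))"
      using p A by (simp add: powr_powr)
    finally show ?thesis .
  qed
  have nn: "A powr p * S ^ DIM('a) \<ge> 0" using S0 by simp
  show ?thesis
    unfolding Lp_norm_def using I v p nn by (simp add: Let_def)
qed

lemma ereal_ge_2_cases:
  fixes p :: ereal
  assumes "2 \<le> p"
  obtains "p = \<infinity>" | p0 where "p = ereal p0" "2 \<le> p0"
  using assms by (cases p) auto

lemma Lp_norm_gauss_le:
  fixes p :: ereal
  assumes p: "2 \<le> p" "inverse p = ereal \<alpha>" and z: "Re z > 0" and U: "pi / (2 * Re z) \<le> U"
  shows "Lp_norm p (gauss z :: 'a::euclidean_space \<Rightarrow> complex) \<le> ennreal (U powr (real DIM('a) * \<alpha> / 2))"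
proof -
  have U0: "U > 0" using U z by (smt (verit) divide_pos_pos pi_gt_zero)
  from p(1) show ?thesis
  proof (cases rule: ereal_ge_2_cases)
    case 1
    have "Lp_norm p (gauss z :: 'a \<Rightarrow> complex) \<le> 1"
      unfolding 1 Lp_norm_def using z
      by (auto intro!: esssup_I simp: norm_gauss mult_nonneg_nonneg)
    moreover have "\<alpha> = 0" using p(2) by (simp add: 1)
    ultimately show ?thesis using U0 by simp
  next
    case (2 p0)
    have p0: "p0 > 0" using 2 by simp
    have \<alpha>: "\<alpha> = 1 / p0" using 2 p0 p(2) by (simp add: inverse_eq_divide)
    have "Lp_norm p (gauss z :: 'a \<Rightarrow> complex) = ennreal (1 * (pi / (p0 * Re z)) powr (real DIM('a) / (2 * p0)))"
      unfolding 2 by (rule Lp_norm_eq_gaussian_modulus) (use z p0 in \<open>auto simp: norm_gauss\<close>)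
    also have "\<dots> \<le> ennreal (U powr (real DIM('a) * \<alpha> / 2))"
    proof (rule ennreal_leI)
      have "pi / (p0 * Re z) \<le> pi / (2 * Re z)" using 2 z by (intro divide_left_mono) auto
      then have b: "pi / (p0 * Re z) \<le> U" using U by linarith
      have e: "real DIM('a) * \<alpha> / 2 = real DIM('a) / (2 * p0)" unfolding \<alpha> by simp
      show "1 * (pi / (p0 * Re z)) powr (real DIM('a) / (2 * p0)) \<le> U powr (real DIM('a) * \<alpha> / 2)"
        unfolding e mult_1_left by (rule powr_mono2) (use b p0 z in auto)
    qed
    finally show ?thesis .
  qed
qed

inductive_set polys :: "('a::euclidean_space \<Rightarrow> complex) set" where
  pconst: "(\<lambda>x. c) \<in> polys"
| plin: "(\<lambda>x. complex_of_real (x \<bullet> v)) \<in> polys"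
| padd: "P \<in> polys \<Longrightarrow> Q \<in> polys \<Longrightarrow> (\<lambda>x. P x + Q x) \<in> polys"
| pmult: "P \<in> polys \<Longrightarrow> Q \<in> polys \<Longrightarrow> (\<lambda>x. P x * Q x) \<in> polys"

lemma polys_has_derivative:
  assumes "P \<in> polys"
  shows "\<exists>D. (\<forall>x. (P has_derivative D x) (at x)) \<and> (\<forall>v. (\<lambda>x. D x v) \<in> polys)"
  using assms
proof induction
  case (pconst c)
  show ?case
    by (rule exI[of _ "\<lambda>x h. 0"]) (auto intro: polys.pconst)
next
  case (plin v)
  show ?case
    by (rule exI[of _ "\<lambda>x h. complex_of_real (h \<bullet> v)"]) (auto intro!: derivative_eq_intros polys.pconst)
next
  case (padd P Q)
  then obtain DP DQ where P: "\<forall>x. (P has_derivative DP x) (at x)" "\<forall>v. (\<lambda>x. DP x v) \<in> polys"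
    and Q: "\<forall>x. (Q has_derivative DQ x) (at x)" "\<forall>v. (\<lambda>x. DQ x v) \<in> polys" by blast
  show ?case
    by (rule exI[of _ "\<lambda>x h. DP x h + DQ x h"]) (use P Q in \<open>auto intro!: has_derivative_add polys.padd\<close>)
next
  case (pmult P Q)
  then obtain DP DQ where P: "\<forall>x. (P has_derivative DP x) (at x)" "\<forall>v. (\<lambda>x. DP x v) \<in> polys"
    and Q: "\<forall>x. (Q has_derivative DQ x) (at x)" "\<forall>v. (\<lambda>x. DQ x v) \<in> polys" by blast
  show ?case
    by (rule exI[of _ "\<lambda>x h. P x * DQ x h + DP x h * Q x"])
       (use P Q pmult.hyps in \<open>auto intro!: has_derivative_mult polys.padd polys.pmult\<close>)
qed

lemma polys_polynomially_bounded:
  assumes "P \<in> polys"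
  shows "\<exists>C d. C \<ge> 0 \<and> (\<forall>x. norm (P x) \<le> C * (1 + norm x) ^ d)"
  using assms
proof induction
  case (pconst c)
  show ?case by (rule exI[of _ "norm c"], rule exI[of _ 0]) simp
next
  case (plin v)
  show ?case
  proof (rule exI[of _ "norm v"], rule exI[of _ 1], intro conjI allI)
    fix x :: 'a
    have "norm (complex_of_real (x \<bullet> v)) \<le> norm x * norm v"
      using Cauchy_Schwarz_ineq2[of x v] by simp
    also have "\<dots> \<le> norm v * (1 + norm x) ^ 1" by (simp add: mult_left_mono algebra_simps)
    finally show "norm (complex_of_real (x \<bullet> v)) \<le> norm v * (1 + norm x) ^ 1" .
  qed simp
next
  case (padd P Q)
  then obtain C1 d1 C2 d2 where P: "C1 \<ge> 0" "\<And>x. norm (P x) \<le> C1 * (1 + norm x) ^ d1"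
    and Q: "C2 \<ge> 0" "\<And>x. norm (Q x) \<le> C2 * (1 + norm x) ^ d2" by blast
  show ?case
  proof (rule exI[of _ "C1 + C2"], rule exI[of _ "d1 + d2"], intro conjI allI)
    fix x :: 'a
    have m1: "(1 + norm x) ^ d1 \<le> (1 + norm x) ^ (d1 + d2)" by (rule power_increasing) auto
    have m2: "(1 + norm x) ^ d2 \<le> (1 + norm x) ^ (d1 + d2)" by (rule power_increasing) auto
    have "norm (P x + Q x) \<le> C1 * (1 + norm x) ^ d1 + C2 * (1 + norm x) ^ d2"
      using norm_triangle_ineq[of "P x" "Q x"] P(2)[of x] Q(2)[of x] by linarith
    also have "\<dots> \<le> C1 * (1 + norm x) ^ (d1 + d2) + C2 * (1 + norm x) ^ (d1 + d2)"
      using m1 m2 P(1) Q(1) by (intro add_mono mult_left_mono) auto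
    finally show "norm (P x + Q x) \<le> (C1 + C2) * (1 + norm x) ^ (d1 + d2)" by (simp add: algebra_simps)
  qed (use P Q in simp)
next
  case (pmult P Q)
  then obtain C1 d1 C2 d2 where P: "C1 \<ge> 0" "\<And>x. norm (P x) \<le> C1 * (1 + norm x) ^ d1"
    and Q: "C2 \<ge> 0" "\<And>x. norm (Q x) \<le> C2 * (1 + norm x) ^ d2" by blast
  show ?case
  proof (rule exI[of _ "C1 * C2"], rule exI[of _ "d1 + d2"], intro conjI allI)
    fix x :: 'a
    have "norm (P x * Q x) \<le> (C1 * (1 + norm x) ^ d1) * (C2 * (1 + norm x) ^ d2)"
      unfolding norm_mult using P Q by (intro mult_mono) auto
    then show "norm (P x * Q x) \<le> C1 * C2 * (1 + norm x) ^ (d1 + d2)" by (simp add: power_add mult_ac)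
  qed (use P Q in simp)
qed

lemma power_times_gauss_bounded:
  fixes a :: real
  assumes a: "a > 0"
  shows "\<exists>B. \<forall>s\<ge>0. (1 + s) ^ m * exp (- a * s\<^sup>2) \<le> B"
proof -
  have "((\<lambda>s. (1 + s) ^ m * exp (- a * s\<^sup>2)) \<longlongrightarrow> 0) at_top"
    using a by real_asymp
  then have "eventually (\<lambda>s. (1 + s) ^ m * exp (- a * s\<^sup>2) < 1) at_top"
    by (rule order_tendstoD) simp
  then obtain S where S: "\<And>s. s \<ge> S \<Longrightarrow> (1 + s) ^ m * exp (- a * s\<^sup>2) < 1"
    by (auto simp: eventually_at_top_linorder)
  have "compact ((\<lambda>s. (1 + s) ^ m * exp (- a * s\<^sup>2)) ` {0..S})"
    by (intro compact_continuous_image continuous_intros) auto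
  then obtain B1 where B1: "\<And>y. y \<in> (\<lambda>s. (1 + s) ^ m * exp (- a * s\<^sup>2)) ` {0..S} \<Longrightarrow> norm y \<le> B1"
    by (meson bounded_iff compact_imp_bounded)
  show ?thesis
  proof (rule exI[of _ "max 1 B1"], intro allI impI)
    fix s :: real assume s: "s \<ge> 0"
    show "(1 + s) ^ m * exp (- a * s\<^sup>2) \<le> max 1 B1"
    proof (cases "s \<ge> S")
      case True then show ?thesis using S[of s] by simp
    next
      case False
      then have "norm ((1 + s) ^ m * exp (- a * s\<^sup>2)) \<le> B1" using s by (intro B1) auto
      then show ?thesis by simp
    qed
  qed
qed

lemma gauss_has_derivative:
  "(gauss z has_derivative (\<lambda>h. gauss z x * ((- 2 * z) * complex_of_real (x \<bullet> h)))) (at (x::'a::euclidean_space))"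
proof -
  have quadratic: "((\<lambda>x::'a. - (z * complex_of_real (x \<bullet> x))) has_derivative (\<lambda>h. (- 2 * z) * complex_of_real (x \<bullet> h))) (at x)"
    by (rule has_derivative_eq_rhs, (rule derivative_intros)+) (auto simp: fun_eq_iff inner_commute algebra_simps)
  have exp: "(exp has_derivative (*) (exp y)) (at y)" for y :: complex
    using DERIV_exp[of y] by (simp add: has_field_derivative_def)
  show ?thesis
    unfolding gauss_def using has_derivative_compose[OF quadratic exp] by (simp add: mult_ac)
qed

lemma deriv_seq_poly_times_gauss:
  fixes z :: complex
  assumes "P \<in> polys"
  shows "\<exists>Q\<in>polys. deriv_seq vs (\<lambda>x::'a::euclidean_space. P x * gauss z x)
            = (\<lambda>x. Q x * gauss z x)"
proof (induction vs)
  case Nil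
  then show ?case using assms by auto
next
  case (Cons v vs)
  then obtain Q where Q: "Q \<in> polys" and eq: "deriv_seq vs (\<lambda>x::'a. P x * gauss z x)
            = (\<lambda>x. Q x * gauss z x)" by blast
  obtain DQ where DQ: "\<forall>x. (Q has_derivative DQ x) (at x)" "\<forall>v. (\<lambda>x. DQ x v) \<in> polys"
    using polys_has_derivative[OF Q] by blast
  have hd: "((\<lambda>x. Q x * gauss z x) has_derivative
      (\<lambda>h. Q x * (gauss z x * ((- 2 * z) * complex_of_real (x \<bullet> h))) + DQ x h * gauss z x)) (at x)" for x
    by (rule has_derivative_mult[OF _ gauss_has_derivative]) (use DQ in auto)
  define Q' where "Q' = (\<lambda>x. Q x * ((\<lambda>x. - 2 * z) x * complex_of_real (x \<bullet> v)) + DQ x v)"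
  have Q': "Q' \<in> polys" unfolding Q'_def
    by (rule polys.padd[OF polys.pmult[OF Q polys.pmult[OF polys.pconst polys.plin]]]) (use DQ in blast)
  have "deriv_seq (v # vs) (\<lambda>x::'a. P x * gauss z x)
      = (\<lambda>x. Q' x * gauss z x)"
  proof
    fix x :: 'a
    have "deriv_seq (v # vs) (\<lambda>x::'a. P x * gauss z x) x
        = frechet_derivative (\<lambda>x. Q x * gauss z x) (at x) v"
      by (simp add: eq)
    also have "\<dots> = Q x * (gauss z x * ((- 2 * z) * complex_of_real (x \<bullet> v))) + DQ x v * gauss z x"
    proof -
      have fd: "frechet_derivative (\<lambda>x. Q x * gauss z x) (at x) =
        (\<lambda>h. Q x * (gauss z x * ((- 2 * z) * complex_of_real (x \<bullet> h))) + DQ x h * gauss z x)"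
        by (rule frechet_derivative_at[OF hd[of x], symmetric])
      show ?thesis by (simp only: fd)
    qed
    also have "\<dots> = Q' x * gauss z x"
      by (simp add: Q'_def algebra_simps)
    finally show "deriv_seq (v # vs) (\<lambda>x::'a. P x * gauss z x) x = Q' x * gauss z x" .
  qed
  then show ?case using Q' by blast
qed

lemma schwartz_gauss:
  fixes z :: complex
  assumes z: "Re z > 0"
  shows "schwartz (gauss z :: 'a::euclidean_space \<Rightarrow> complex)"
  unfolding schwartz_def
proof (intro allI impI conjI)
  fix vs :: "'a list" and x :: 'a and k :: nat
  obtain Q where Q: "Q \<in> polys" and eq: "deriv_seq vs (\<lambda>x::'a. (\<lambda>x. 1) x * gauss z x)
            = (\<lambda>x. Q x * gauss z x)"
    using deriv_seq_poly_times_gauss[OF polys.pconst[of 1], of vs z] by blast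
  then have eq': "deriv_seq vs (gauss z :: 'a \<Rightarrow> complex) = (\<lambda>x. Q x * gauss z x)"
    by simp
  obtain DQ where DQ: "\<forall>x. (Q has_derivative DQ x) (at x)"
    using polys_has_derivative[OF Q] by blast
  show "deriv_seq vs (gauss z :: 'a \<Rightarrow> complex) differentiable at x"
    unfolding eq' differentiable_def
    by (rule exI, rule has_derivative_mult[OF _ gauss_has_derivative]) (use DQ in auto)
  obtain C d where C: "C \<ge> 0" "\<And>x. norm (Q x) \<le> C * (1 + norm x) ^ d"
    using polys_polynomially_bounded[OF Q] by blast
  obtain B where B: "\<And>s. s \<ge> 0 \<Longrightarrow> (1 + s) ^ (k + d) * exp (- Re z * s\<^sup>2) \<le> B"
    using power_times_gauss_bounded[OF z, of "k + d"] by auto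
  show "bounded (range (\<lambda>x. norm x ^ k * norm (deriv_seq vs (gauss z :: 'a \<Rightarrow> complex) x)))"
    unfolding bounded_iff
  proof (intro exI[of _ "C * B"] ballI)
    fix y assume "y \<in> range (\<lambda>x. norm x ^ k * norm (deriv_seq vs (gauss z :: 'a \<Rightarrow> complex) x))"
    then obtain x :: 'a where y: "y = norm x ^ k * norm (Q x * gauss z x)"
      unfolding eq' by auto
    have ne: "norm (gauss z x) = exp (- Re z * (norm x)\<^sup>2)"
      by (simp add: norm_gauss dot_square_norm)
    have "norm x ^ k \<le> (1 + norm x) ^ k" by (rule power_mono) auto
    moreover have "norm (Q x) * exp (- Re z * (norm x)\<^sup>2) \<le> C * (1 + norm x) ^ d * exp (- Re z * (norm x)\<^sup>2)"
      using C(2)[of x] by (rule mult_right_mono) simp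
    ultimately have "y \<le> (1 + norm x) ^ k * (C * (1 + norm x) ^ d * exp (- Re z * (norm x)\<^sup>2))"
      unfolding y norm_mult ne by (rule mult_mono) auto
    also have "\<dots> = C * ((1 + norm x) ^ (k + d) * exp (- Re z * (norm x)\<^sup>2))"
      by (simp add: power_add mult_ac)
    also have "\<dots> \<le> C * B" using B[of "norm x"] C(1) by (intro mult_left_mono) auto
    finally have "y \<le> C * B" .
    moreover have "y \<ge> 0" unfolding y by simp
    ultimately show "norm y \<le> C * B" by simp
  qed
qed

lemma fourier_gauss:
  fixes \<xi> :: "'a::euclidean_space"
  assumes z: "Re z > 0"
  shows "fourier (gauss z) \<xi> = gauss_const z ^ DIM('a) * gauss (complex_of_real (pi^2) / z) \<xi>"
proof -
  have h: "has_bochner_integral lborel (\<lambda>x::'a. exp (- (z * complex_of_real (x \<bullet> x)) + (- (2 * complex_of_real pi * \<i>)) * complex_of_real (x \<bullet> \<xi>)))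
      (csqrt (complex_of_real pi / z) ^ DIM('a) * exp ((- (2 * complex_of_real pi * \<i>)) ^ 2 * complex_of_real (\<xi> \<bullet> \<xi>) / (4 * z)))"
    by (rule has_bochner_integral_exp_quadratic_linear[OF z])
  have e1: "gauss z x * cis (- 2 * pi * (x \<bullet> \<xi>)) = exp (- (z * complex_of_real (x \<bullet> x)) + (- (2 * complex_of_real pi * \<i>)) * complex_of_real (x \<bullet> \<xi>))" for x :: 'a
    by (simp add: gauss_def cis_conv_exp exp_add[symmetric] algebra_simps)
  have e2: "(- (2 * complex_of_real pi * \<i>)) ^ 2 * complex_of_real (\<xi> \<bullet> \<xi>) / (4 * z) = - (complex_of_real (pi^2) / z * complex_of_real (\<xi> \<bullet> \<xi>))"
    by (simp add: power2_eq_square field_simps)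
  show ?thesis
    unfolding fourier_def e1 unfolding gauss_const_def gauss_def by (rule has_bochner_integral_integral_eq[OF h[unfolded e2]])
qed

lemma Re_of_real_divide_pos: "Re z > 0 \<Longrightarrow> r > 0 \<Longrightarrow> Re (complex_of_real r / z) > 0"
proof -
  assume a: "Re z > 0" "r > 0"
  have "(Re z)\<^sup>2 + (Im z)\<^sup>2 > 0" using a by (simp add: add_pos_nonneg)
  then show ?thesis using a by (simp add: Re_divide)
qed

lemma has_bochner_integral_cis_gauss_inner:
  fixes x \<xi> :: "'a::euclidean_space"
  assumes w2: "Re w2 > 0"
  shows "has_bochner_integral lborel
    (\<lambda>\<eta>. F * (K2 * gauss w2 \<eta>) * cis (\<xi> \<bullet> \<eta>) * cis (2 * pi * (x \<bullet> (\<xi> + \<eta>))))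
    (F * cis (2 * pi * (x \<bullet> \<xi>)) * K2 * (gauss_const w2 ^ DIM('a) * exp (\<i> ^ 2 * complex_of_real ((\<xi> + (2 * pi) *\<^sub>R x) \<bullet> (\<xi> + (2 * pi) *\<^sub>R x)) / (4 * w2))))"
proof -
  have h: "has_bochner_integral lborel (\<lambda>\<eta>::'a. exp (- (w2 * complex_of_real (\<eta> \<bullet> \<eta>)) + \<i> * complex_of_real (\<eta> \<bullet> (\<xi> + (2 * pi) *\<^sub>R x))))
      (gauss_const w2 ^ DIM('a) * exp (\<i> ^ 2 * complex_of_real ((\<xi> + (2 * pi) *\<^sub>R x) \<bullet> (\<xi> + (2 * pi) *\<^sub>R x)) / (4 * w2)))"
    unfolding gauss_const_def by (rule has_bochner_integral_exp_quadratic_linear[OF w2])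
  have e: "F * (K2 * gauss w2 \<eta>) * cis (\<xi> \<bullet> \<eta>) * cis (2 * pi * (x \<bullet> (\<xi> + \<eta>)))
      = (F * cis (2 * pi * (x \<bullet> \<xi>)) * K2) * (exp (- (w2 * complex_of_real (\<eta> \<bullet> \<eta>))) * exp (\<i> * complex_of_real (\<eta> \<bullet> (\<xi> + (2 * pi) *\<^sub>R x))))" for \<eta> :: 'a
  proof -
    have i1: "\<eta> \<bullet> (\<xi> + (2 * pi) *\<^sub>R x) = \<xi> \<bullet> \<eta> + 2 * pi * (x \<bullet> \<eta>)"
      by (simp add: inner_add_right inner_commute)
    have i2: "2 * pi * (x \<bullet> (\<xi> + \<eta>)) = 2 * pi * (x \<bullet> \<xi>) + 2 * pi * (x \<bullet> \<eta>)"
      by (simp add: inner_add_right algebra_simps)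
    show ?thesis
      unfolding i1 i2 gauss_def cis_conv_exp
      by (simp add: exp_add distrib_left mult_ac)
  qed
  show ?thesis unfolding e by (rule has_bochner_integral_mult_right[OF h[unfolded exp_add]])
qed



lemma integral_cis_gauss_inner:
  fixes x \<xi> :: "'a::euclidean_space"
  assumes z1: "Re z1 > 0" and z2: "Re z2 > 0"
  defines "w1 \<equiv> complex_of_real (pi^2) / z1" and "w2 \<equiv> complex_of_real (pi^2) / z2"
  defines "Z \<equiv> w1 + 1 / (4 * w2)" and "c \<equiv> 2 * complex_of_real pi * \<i> - complex_of_real pi / w2"
  shows "(LINT \<eta>|lborel. fourier (gauss z1) \<xi> * fourier (gauss z2) \<eta> * cis (\<xi> \<bullet> \<eta>) * cis (2 * pi * (x \<bullet> (\<xi> + \<eta>))))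
       = gauss_const z1 ^ DIM('a) * gauss_const z2 ^ DIM('a) * gauss_const w2 ^ DIM('a) * gauss (complex_of_real (pi^2) / w2) x
         * exp (- (Z * complex_of_real (\<xi> \<bullet> \<xi>)) + c * complex_of_real (\<xi> \<bullet> x))"
proof -
  let ?n = "DIM('a)"
  let ?y = "\<xi> + (2 * pi) *\<^sub>R x"
  have w2p: "Re w2 > 0" unfolding w2_def by (rule Re_of_real_divide_pos[OF z2]) simp
  have "(LINT \<eta>|lborel. fourier (gauss z1) \<xi> * fourier (gauss z2) \<eta> * cis (\<xi> \<bullet> \<eta>) * cis (2 * pi * (x \<bullet> (\<xi> + \<eta>))))
      = (LINT \<eta>|lborel. (gauss_const z1 ^ ?n * gauss w1 \<xi>) * (gauss_const z2 ^ ?n * gauss w2 \<eta>) * cis (\<xi> \<bullet> \<eta>) * cis (2 * pi * (x \<bullet> (\<xi> + \<eta>))))"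
    unfolding fourier_gauss[OF z1] fourier_gauss[OF z2] w1_def w2_def ..
  also have "\<dots> = (gauss_const z1 ^ ?n * gauss w1 \<xi>) * cis (2 * pi * (x \<bullet> \<xi>)) * gauss_const z2 ^ ?n *
      (gauss_const w2 ^ ?n * exp (\<i> ^ 2 * complex_of_real (?y \<bullet> ?y) / (4 * w2)))"
    by (rule has_bochner_integral_integral_eq[OF has_bochner_integral_cis_gauss_inner[OF w2p]])
  also have "\<dots> = gauss_const z1 ^ ?n * gauss_const z2 ^ ?n * gauss_const w2 ^ ?n *
      exp (- (w1 * complex_of_real (\<xi> \<bullet> \<xi>)) + \<i> * complex_of_real (2 * pi * (x \<bullet> \<xi>))
           + \<i> ^ 2 * complex_of_real (?y \<bullet> ?y) / (4 * w2))"
    unfolding gauss_def cis_conv_exp exp_add by (simp add: mult_ac)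
  also have "- (w1 * complex_of_real (\<xi> \<bullet> \<xi>)) + \<i> * complex_of_real (2 * pi * (x \<bullet> \<xi>))
           + \<i> ^ 2 * complex_of_real (?y \<bullet> ?y) / (4 * w2)
      = - (complex_of_real (pi^2) / w2 * complex_of_real (x \<bullet> x))
        + (- (Z * complex_of_real (\<xi> \<bullet> \<xi>)) + c * complex_of_real (\<xi> \<bullet> x))"
  proof -
    have y: "?y \<bullet> ?y = \<xi> \<bullet> \<xi> + 4 * pi * (\<xi> \<bullet> x) + 4 * pi^2 * (x \<bullet> x)"
      by (simp add: inner_add_left inner_add_right inner_commute power2_eq_square algebra_simps)
    have "w2 \<noteq> 0" using w2p by auto
    then show ?thesis
      unfolding y Z_def c_def by (simp add: field_simps inner_commute power2_eq_square)
  qed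
  finally show ?thesis
    unfolding exp_add gauss_def by (simp add: mult_ac)
qed

lemma bilin_mult_cis_gauss:
  fixes x :: "'a::euclidean_space"
  assumes z1: "Re z1 > 0" and z2: "Re z2 > 0"
  defines "w1 \<equiv> complex_of_real (pi^2) / z1" and "w2 \<equiv> complex_of_real (pi^2) / z2"
  defines "Z \<equiv> w1 + 1 / (4 * w2)" and "c \<equiv> 2 * complex_of_real pi * \<i> - complex_of_real pi / w2"
  shows "bilin_mult (\<lambda>\<xi> \<eta>. cis (\<xi> \<bullet> \<eta>)) (gauss z1) (gauss z2) x
       = gauss_const z1 ^ DIM('a) * gauss_const z2 ^ DIM('a) * gauss_const w2 ^ DIM('a) * gauss_const Z ^ DIM('a) *
         gauss (complex_of_real (pi^2) / w2 - c ^ 2 / (4 * Z)) x"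
proof -
  let ?n = "DIM('a)"
  define K0 where "K0 = gauss_const z1 ^ ?n * gauss_const z2 ^ ?n * gauss_const w2 ^ ?n * gauss (complex_of_real (pi^2) / w2) x"
  have w1p: "Re w1 > 0" unfolding w1_def by (rule Re_of_real_divide_pos[OF z1]) simp
  have w2p: "Re w2 > 0" unfolding w2_def by (rule Re_of_real_divide_pos[OF z2]) simp
  have "1 / (4 * w2) = complex_of_real (1/4) / w2" by (simp add: field_simps)
  then have Zp: "Re Z > 0" unfolding Z_def using w1p Re_of_real_divide_pos[OF w2p, of "1/4"] by simp
  have "bilin_mult (\<lambda>\<xi> \<eta>. cis (\<xi> \<bullet> \<eta>)) (gauss z1) (gauss z2) x
      = (LINT \<xi>|lborel. K0 * exp (- (Z * complex_of_real (\<xi> \<bullet> \<xi>)) + c * complex_of_real (\<xi> \<bullet> x)))"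
    unfolding bilin_mult_def integral_cis_gauss_inner[OF z1 z2] K0_def Z_def c_def w1_def w2_def ..
  also have "\<dots> = K0 * (gauss_const Z ^ ?n * exp (c ^ 2 * complex_of_real (x \<bullet> x) / (4 * Z)))"
    unfolding gauss_const_def
    by (rule has_bochner_integral_integral_eq[OF has_bochner_integral_mult_right[OF has_bochner_integral_exp_quadratic_linear[OF Zp]]])
  also have "\<dots> = gauss_const z1 ^ ?n * gauss_const z2 ^ ?n * gauss_const w2 ^ ?n * gauss_const Z ^ ?n *
         gauss (complex_of_real (pi^2) / w2 - c ^ 2 / (4 * Z)) x"
  proof -
    have "- (complex_of_real (pi^2) / w2 * complex_of_real (x \<bullet> x)) + c ^ 2 * complex_of_real (x \<bullet> x) / (4 * Z)
        = - ((complex_of_real (pi^2) / w2 - c ^ 2 / (4 * Z)) * complex_of_real (x \<bullet> x))"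
      by (simp add: algebra_simps)
    then show ?thesis unfolding K0_def gauss_def
      by (simp add: mult_ac exp_add[symmetric])
  qed
  finally show ?thesis .
qed


text \<open>By \<open>fourier_gauss\<close>, \<open>gauss (chirp1 t)\<close> has Fourier transform with parameter \<open>t - \<i> / 2\<close>. The
  imaginary parts of both chirps are chosen so that, after the \<open>\<eta>\<close>-integral, the \<open>\<xi>\<close>-integrand is
  a Gaussian with the real parameter \<open>t * (1 + 1 / (4 * pi\<^sup>2))\<close> (see \<open>chirp_parameters\<close>); its
  integral is the large factor in the amplitude of the output.\<close>

definition chirp1 :: "real \<Rightarrow> complex" where
  "chirp1 t = complex_of_real (pi^2) / (complex_of_real t - \<i> / 2)"

definition chirp2 :: "real \<Rightarrow> complex" where
  "chirp2 t = complex_of_real t + complex_of_real (2 * pi^2) * \<i>"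

lemma chirp_parameters:
  fixes t :: real
  assumes t: "0 < t"
  shows "Re (chirp1 t) = pi^2 * t / (t^2 + 1/4)" "Re (chirp2 t) = t"
    "complex_of_real (pi^2) / chirp1 t + 1 / (4 * (complex_of_real (pi^2) / chirp2 t)) = complex_of_real (t * (1 + 1 / (4 * pi^2)))"
    "2 * complex_of_real pi * \<i> - complex_of_real pi / (complex_of_real (pi^2) / chirp2 t) = complex_of_real (- t / pi)"
proof -
  have d0: "complex_of_real t - \<i> / 2 \<noteq> 0" by (auto simp: complex_eq_iff)
  have z2nz: "chirp2 t \<noteq> 0" using t by (auto simp: chirp2_def complex_eq_iff)
  show "Re (chirp1 t) = pi^2 * t / (t^2 + 1/4)"
    unfolding chirp1_def by (simp add: Re_divide power2_eq_square)
  show "Re (chirp2 t) = t" unfolding chirp2_def by simp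
  have w1: "complex_of_real (pi^2) / chirp1 t = complex_of_real t - \<i> / 2"
    unfolding chirp1_def using d0 by (simp add: field_simps)
  have q: "1 / (4 * (complex_of_real (pi^2) / chirp2 t)) = chirp2 t / (4 * complex_of_real (pi^2))"
    using z2nz by (simp add: field_simps)
  show "complex_of_real (pi^2) / chirp1 t + 1 / (4 * (complex_of_real (pi^2) / chirp2 t)) = complex_of_real (t * (1 + 1 / (4 * pi^2)))"
    unfolding w1 q unfolding chirp2_def by (simp add: complex_eq_iff field_simps power2_eq_square)
  show "2 * complex_of_real pi * \<i> - complex_of_real pi / (complex_of_real (pi^2) / chirp2 t) = complex_of_real (- t / pi)"
    using z2nz unfolding chirp2_def by (simp add: complex_eq_iff field_simps power2_eq_square)
qed

lemma Re_chirp_pos: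
  assumes "0 < t"
  shows "0 < Re (chirp1 t)" "0 < Re (chirp2 t)"
  using assms by (simp_all add: chirp_parameters add_pos_pos)

lemma norm_gauss_const_chirps_ge:
  fixes t :: real
  assumes t: "0 < t"
  defines "k \<equiv> 1 + 1 / (4 * pi^2)"
  shows "sqrt (1 / (2 * t * k)) \<le>
    norm (gauss_const (chirp1 t) * gauss_const (chirp2 t) * gauss_const (complex_of_real (pi^2) / chirp2 t) * gauss_const (complex_of_real (t * k)))"
proof -
  have tk: "t * k > 0" using t by (simp add: k_def add_pos_pos)
  have z1nz: "chirp1 t \<noteq> 0" and z2nz: "chirp2 t \<noteq> 0" using Re_chirp_pos[OF t] by auto
  have n2: "norm (gauss_const (chirp2 t)) * norm (gauss_const (complex_of_real (pi^2) / chirp2 t)) = 1"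
  proof -
    let ?z2 = "chirp2 t"
    have a: "norm (gauss_const ?z2) = sqrt (pi / norm ?z2)" by (rule norm_gauss_const[OF z2nz])
    have w2nz: "complex_of_real (pi^2) / ?z2 \<noteq> 0" using z2nz by simp
    have nw: "norm (complex_of_real (pi^2) / ?z2) = pi^2 / norm ?z2" by (simp add: norm_divide norm_power)
    have b: "norm (gauss_const (complex_of_real (pi^2) / ?z2)) = sqrt (pi / (pi^2 / norm ?z2))"
      unfolding norm_gauss_const[OF w2nz] nw ..
    have c: "(pi / norm ?z2) * (pi / (pi^2 / norm ?z2)) = 1" using z2nz by (simp add: field_simps power2_eq_square)
    show ?thesis unfolding a b real_sqrt_mult[symmetric] c by simp
  qed
  have n1: "sqrt (1 / (2 * pi)) \<le> norm (gauss_const (chirp1 t))"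
  proof -
    have "norm (complex_of_real (pi^2)) = pi^2" by (simp only: norm_of_real) simp
    moreover have "norm (complex_of_real t - \<i> / 2) \<noteq> 0" by (auto simp: complex_eq_iff)
    ultimately have e: "pi / norm (chirp1 t) = norm (complex_of_real t - \<i> / 2) / pi"
      unfolding chirp1_def norm_divide by (simp add: field_simps power2_eq_square)
    have "1/2 \<le> norm (complex_of_real t - \<i> / 2)"
      using abs_Im_le_cmod[of "complex_of_real t - \<i> / 2"] by simp
    then have "1 / (2 * pi) \<le> pi / norm (chirp1 t)" unfolding e by (simp add: field_simps)
    then show ?thesis using z1nz by (simp add: norm_gauss_const)
  qed
  have Znz: "complex_of_real (t * k) \<noteq> 0" using tk by (simp only: of_real_eq_0_iff)
  have nZ0: "norm (complex_of_real (t * k)) = t * k" using tk by (simp only: norm_of_real)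
  have nZ: "norm (gauss_const (complex_of_real (t * k))) = sqrt (pi / (t * k))"
    unfolding norm_gauss_const[OF Znz] nZ0 ..
  have "sqrt (1 / (2 * t * k)) = sqrt (1 / (2 * pi)) * sqrt (pi / (t * k))"
    by (simp add: real_sqrt_mult[symmetric] field_simps)
  also have "\<dots> \<le> norm (gauss_const (chirp1 t)) * sqrt (pi / (t * k))"
    by (rule mult_right_mono[OF n1]) (use tk in simp)
  also have "\<dots> = norm (gauss_const (chirp1 t) * gauss_const (chirp2 t) * gauss_const (complex_of_real (pi^2) / chirp2 t) * gauss_const (complex_of_real (t * k)))"
    unfolding norm_mult nZ using n2 by (simp add: mult_ac)
  finally show ?thesis .
qed

lemma bilin_mult_cis_chirps:
  fixes t :: real
  assumes t: "0 < t"
  obtains K W where "bilin_mult (\<lambda>\<xi> \<eta>. cis (\<xi> \<bullet> \<eta>)) (gauss (chirp1 t)) (gauss (chirp2 t)) = (\<lambda>x::'a::euclidean_space. K * gauss W x)"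
    and "0 < Re W" "Re W \<le> t" "sqrt (1 / (2 * t * (1 + 1 / (4 * pi^2)))) ^ DIM('a) \<le> norm K"
proof -
  let ?z1 = "chirp1 t" and ?z2 = "chirp2 t" and ?k = "1 + 1 / (4 * pi^2)"
  define K where "K = gauss_const ?z1 ^ DIM('a) * gauss_const ?z2 ^ DIM('a) * gauss_const (complex_of_real (pi^2) / ?z2) ^ DIM('a) *
              gauss_const (complex_of_real (t * ?k)) ^ DIM('a)"
  define W where "W = ?z2 - complex_of_real (t / (4 * pi^2 + 1))"
  have p: "4 * pi^2 + 1 > 0" by (simp add: add_pos_nonneg)
  have "t - t / (4 * pi^2 + 1) = 4 * pi^2 * t / (4 * pi^2 + 1)" using p by (simp add: field_simps)
  then have ReW: "Re W = 4 * pi^2 * t / (4 * pi^2 + 1)"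
    unfolding W_def by (simp add: chirp_parameters[OF t])
  have W: "complex_of_real (pi^2) / (complex_of_real (pi^2) / ?z2) - (complex_of_real (- t / pi))^2 / (4 * complex_of_real (t * ?k)) = W"
  proof -
    have "4 * (t * ?k) = t * (4 * pi^2 + 1) / pi^2" by (simp add: field_simps)
    moreover have "(- t / pi)^2 = t^2 / pi^2" by (simp add: power_divide)
    ultimately have "(- t / pi)^2 / (4 * (t * ?k)) = t / (4 * pi^2 + 1)"
      using t p by (simp add: power2_eq_square)
    then have "(complex_of_real (- t / pi))^2 / (4 * complex_of_real (t * ?k)) = complex_of_real (t / (4 * pi^2 + 1))"
      by (metis of_real_divide of_real_mult of_real_numeral of_real_power)
    moreover have "?z2 \<noteq> 0" using Re_chirp_pos[OF t] by auto
    ultimately show ?thesis unfolding W_def by simp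
  qed
  show ?thesis
  proof
    show "bilin_mult (\<lambda>\<xi> \<eta>. cis (\<xi> \<bullet> \<eta>)) (gauss ?z1) (gauss ?z2) = (\<lambda>x::'a. K * gauss W x)"
      using bilin_mult_cis_gauss[OF Re_chirp_pos[OF t], unfolded chirp_parameters(3,4)[OF t] W]
      unfolding K_def by blast
    show "0 < Re W" unfolding ReW using t p by simp
    show "Re W \<le> t" unfolding ReW using t p by (simp add: field_simps)
    show "sqrt (1 / (2 * t * ?k)) ^ DIM('a) \<le> norm K"
      unfolding K_def norm_power power_mult_distrib[symmetric] norm_mult[symmetric]
      by (rule power_mono[OF norm_gauss_const_chirps_ge[OF t]]) (use t in \<open>simp add: add_pos_pos\<close>)
  qed
qed


lemma chirp1_Re_ge:
  assumes "0 < t" "t \<le> 1"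
  shows "t \<le> Re (chirp1 t)"
proof -
  have "t^2 \<le> 1" using assms by (simp add: power_le_one)
  moreover have "3^2 \<le> pi^2" using pi_gt3 by (intro power_mono) auto
  ultimately have "t * (t^2 + 1/4) \<le> t * pi^2" using assms by (intro mult_left_mono) auto
  then show ?thesis
    using assms by (simp add: chirp_parameters le_divide_eq add_pos_pos mult_ac)
qed

lemma Lp_norm_chirps_le:
  fixes p q :: ereal
  assumes p: "2 \<le> p" "inverse p = ereal \<alpha>" and q: "2 \<le> q" "inverse q = ereal \<beta>"
    and t: "0 < t" "t \<le> 1"
  shows "Lp_norm p (gauss (chirp1 t) :: 'a::euclidean_space \<Rightarrow> complex) * Lp_norm q (gauss (chirp2 t) :: 'a \<Rightarrow> complex)
    \<le> ennreal ((pi / (2 * t)) powr (real DIM('a) * (\<alpha> + \<beta>) / 2))"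
proof -
  have "pi / (2 * Re (chirp1 t)) \<le> pi / (2 * t)"
    using chirp1_Re_ge[OF t] t by (intro divide_left_mono) auto
  then have "Lp_norm p (gauss (chirp1 t) :: 'a \<Rightarrow> complex) \<le> ennreal ((pi / (2 * t)) powr (real DIM('a) * \<alpha> / 2))"
    by (rule Lp_norm_gauss_le[OF p Re_chirp_pos(1)[OF t(1)]])
  moreover have "Lp_norm q (gauss (chirp2 t) :: 'a \<Rightarrow> complex) \<le> ennreal ((pi / (2 * t)) powr (real DIM('a) * \<beta> / 2))"
    by (rule Lp_norm_gauss_le[OF q Re_chirp_pos(2)[OF t(1)]]) (simp add: chirp_parameters t)
  ultimately have "Lp_norm p (gauss (chirp1 t) :: 'a \<Rightarrow> complex) * Lp_norm q (gauss (chirp2 t) :: 'a \<Rightarrow> complex)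
      \<le> ennreal ((pi / (2 * t)) powr (real DIM('a) * \<alpha> / 2)) * ennreal ((pi / (2 * t)) powr (real DIM('a) * \<beta> / 2))"
    by (rule mult_mono) auto
  also have "\<dots> = ennreal ((pi / (2 * t)) powr (real DIM('a) * (\<alpha> + \<beta>) / 2))"
    by (simp add: ennreal_mult[symmetric] powr_add[symmetric] add_divide_distrib distrib_left)
  finally show ?thesis .
qed

lemma Lp_norm_bilin_mult_cis_chirps_ge:
  fixes r t :: real
  assumes r: "0 < r" "r \<le> 2" and t: "0 < t"
  shows "ennreal (sqrt (1 / (2 * t * (1 + 1 / (4 * pi^2)))) ^ DIM('a) * (pi / (2 * t)) powr (real DIM('a) / (2 * r)))
    \<le> Lp_norm (ereal r) (bilin_mult (\<lambda>\<xi> \<eta>. cis (\<xi> \<bullet> \<eta>)) (gauss (chirp1 t)) (gauss (chirp2 t)) :: 'a::euclidean_space \<Rightarrow> complex)"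
proof -
  obtain K W where M: "bilin_mult (\<lambda>\<xi> \<eta>. cis (\<xi> \<bullet> \<eta>)) (gauss (chirp1 t)) (gauss (chirp2 t)) = (\<lambda>x::'a. K * gauss W x)"
    and W: "0 < Re W" "Re W \<le> t" and K: "sqrt (1 / (2 * t * (1 + 1 / (4 * pi^2)))) ^ DIM('a) \<le> norm K"
    using bilin_mult_cis_chirps[OF t] by blast
  have "r * Re W \<le> 2 * t" using mult_mono[of r 2 "Re W" t] r W by simp
  then have "pi / (2 * t) \<le> pi / (r * Re W)"
    by (rule divide_left_mono) (use r W in auto)
  then have "(pi / (2 * t)) powr (real DIM('a) / (2 * r)) \<le> (pi / (r * Re W)) powr (real DIM('a) / (2 * r))"
    using r t by (intro powr_mono2) auto
  with K have "sqrt (1 / (2 * t * (1 + 1 / (4 * pi^2)))) ^ DIM('a) * (pi / (2 * t)) powr (real DIM('a) / (2 * r))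
      \<le> norm K * (pi / (r * Re W)) powr (real DIM('a) / (2 * r))"
    by (intro mult_mono) auto
  then show ?thesis
    unfolding M by (subst Lp_norm_eq_gaussian_modulus[where A="norm K" and a="Re W"])
      (use W r in \<open>auto simp: norm_mult norm_gauss intro: ennreal_leI\<close>)
qed

lemma ereal_inverse_ge_2:
  fixes p :: ereal
  assumes "2 \<le> p"
  obtains \<alpha> where "inverse p = ereal \<alpha>" "0 \<le> \<alpha>" "\<alpha> \<le> 1/2"
  using assms by (cases rule: ereal_ge_2_cases) (auto simp: inverse_eq_divide)

lemma ereal_inverse_eq_real:
  fixes r :: ereal
  assumes "inverse r = ereal g" "g > 0"
  shows "r = ereal (1 / g)"
  using assms by (cases r) (auto simp: inverse_eq_divide split: if_splits)

lemma cis_multiplier_unbounded_on_chirps: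
  fixes p q r :: ereal
  assumes p: "2 \<le> p" and q: "2 \<le> q"
    and pqr: "inverse p + inverse q = inverse r" and local_L2: "1 / 2 \<le> inverse p + inverse q"
  obtains t :: real and U :: real where "0 < t" "0 < U"
    and "Lp_norm p (gauss (chirp1 t) :: 'a::euclidean_space \<Rightarrow> complex) * Lp_norm q (gauss (chirp2 t) :: 'a \<Rightarrow> complex) \<le> ennreal U"
    and "ennreal (L * U) \<le> Lp_norm r (bilin_mult (\<lambda>\<xi> \<eta>. cis (\<xi> \<bullet> \<eta>)) (gauss (chirp1 t)) (gauss (chirp2 t)) :: 'a \<Rightarrow> complex)"
proof -
  obtain \<alpha> where \<alpha>: "inverse p = ereal \<alpha>" "0 \<le> \<alpha>" using ereal_inverse_ge_2[OF p] by blast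
  obtain \<beta> where \<beta>: "inverse q = ereal \<beta>" "0 \<le> \<beta>" using ereal_inverse_ge_2[OF q] by blast
  have \<alpha>\<beta>: "1/2 \<le> \<alpha> + \<beta>" using local_L2 \<alpha> \<beta> by (simp add: divide_ereal_def)
  define r0 where "r0 = 1 / (\<alpha> + \<beta>)"
  have r: "r = ereal r0" unfolding r0_def
    by (rule ereal_inverse_eq_real) (use pqr \<alpha> \<beta> \<alpha>\<beta> in auto)
  have r0: "0 < r0" "r0 \<le> 2" using \<alpha>\<beta> by (auto simp: r0_def field_simps)
  define k where "k = 1 + 1 / (4 * pi^2)"
  have k: "1 < k" unfolding k_def by simp
  define X where "X = L^2 + 1"
  define t where "t = 1 / (2 * k * X)"
  have X: "1 \<le> X" unfolding X_def by simp
  have "1 \<le> k * X" using mult_mono[of 1 k 1 X] k X by simp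
  then have t: "0 < t" "t \<le> 1" by (simp_all add: t_def field_simps)
  define U where "U = (pi / (2 * t)) powr (real DIM('a) * (\<alpha> + \<beta>) / 2)"
  have L: "L \<le> sqrt (1 / (2 * t * k)) ^ DIM('a)"
  proof -
    have "L \<le> sqrt X" unfolding X_def by (rule real_le_rsqrt) simp
    also have "\<dots> \<le> sqrt X ^ DIM('a)" using X by (simp add: power_increasing[of 1 _ "sqrt X", simplified])
    finally show ?thesis using k X by (simp add: t_def)
  qed
  show ?thesis
  proof
    show "0 < t" by (rule t(1))
    show "0 < U" unfolding U_def using t by simp
    show "Lp_norm p (gauss (chirp1 t) :: 'a \<Rightarrow> complex) * Lp_norm q (gauss (chirp2 t) :: 'a \<Rightarrow> complex) \<le> ennreal U"
      unfolding U_def by (rule Lp_norm_chirps_le[OF p \<alpha>(1) q \<beta>(1) t])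
    have "ennreal (L * U) \<le> ennreal (sqrt (1 / (2 * t * k)) ^ DIM('a) * (pi / (2 * t)) powr (real DIM('a) / (2 * r0)))"
      using L t by (intro ennreal_leI mult_right_mono) (auto simp: U_def r0_def)
    also have "\<dots> \<le> Lp_norm r (bilin_mult (\<lambda>\<xi> \<eta>. cis (\<xi> \<bullet> \<eta>)) (gauss (chirp1 t)) (gauss (chirp2 t)) :: 'a \<Rightarrow> complex)"
      unfolding r k_def by (rule Lp_norm_bilin_mult_cis_chirps_ge[OF r0 t(1)])
    finally show "ennreal (L * U) \<le> \<dots>" .
  qed
qed

theorem mainTheorem4:
  fixes p q r :: ereal
  assumes "2 \<le> p" and "2 \<le> q"
    and "inverse p + inverse q = inverse r"
    and "inverse p + inverse q \<ge> 1 / 2"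
    and "p = 2 \<or> q = 2 \<or> r = 2"
  shows "\<not> bilinear_multiplier_class p q r (\<lambda>(\<xi>::'a::euclidean_space) \<eta>. cis (\<xi> \<bullet> \<eta>))"
proof
  assume "bilinear_multiplier_class p q r (\<lambda>(\<xi>::'a::euclidean_space) \<eta>. cis (\<xi> \<bullet> \<eta>))"
  then obtain C :: real where C: "\<And>f g. schwartz f \<Longrightarrow> schwartz g \<Longrightarrow>
      Lp_norm r (bilin_mult (\<lambda>(\<xi>::'a) \<eta>. cis (\<xi> \<bullet> \<eta>)) f g) \<le> ennreal C * Lp_norm p f * Lp_norm q g"
    unfolding bilinear_multiplier_class_def by blast
  obtain t U where t: "0 < t" and U: "0 < U"
    and upper: "Lp_norm p (gauss (chirp1 t) :: 'a \<Rightarrow> complex) * Lp_norm q (gauss (chirp2 t) :: 'a \<Rightarrow> complex) \<le> ennreal U"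
    and lower: "ennreal ((max C 0 + 1) * U) \<le> Lp_norm r (bilin_mult (\<lambda>\<xi> \<eta>. cis (\<xi> \<bullet> \<eta>)) (gauss (chirp1 t)) (gauss (chirp2 t)) :: 'a \<Rightarrow> complex)"
    using cis_multiplier_unbounded_on_chirps[OF assms(1-4)] by blast
  have "Lp_norm r (bilin_mult (\<lambda>\<xi> \<eta>. cis (\<xi> \<bullet> \<eta>)) (gauss (chirp1 t)) (gauss (chirp2 t)) :: 'a \<Rightarrow> complex)
      \<le> ennreal C * Lp_norm p (gauss (chirp1 t) :: 'a \<Rightarrow> complex) * Lp_norm q (gauss (chirp2 t) :: 'a \<Rightarrow> complex)"
    by (intro C schwartz_gauss Re_chirp_pos t)
  also have "\<dots> \<le> ennreal (max C 0) * ennreal U"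
    unfolding mult.assoc using upper by (intro mult_mono ennreal_leI) auto
  also have "\<dots> = ennreal (max C 0 * U)"
    using U by (simp add: ennreal_mult)
  also have "\<dots> < ennreal ((max C 0 + 1) * U)"
    using U by (intro ennreal_lessI) (auto simp: algebra_simps intro: add_pos_nonneg)
  finally show False using lower by simp
qed

end
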